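(* Let $G=G_{\mathbf E}$ be a multi-GGS group which is not the constant GGS group. Every element of $G$ of order $p$ either lies in $\mathrm{Stab}_G(1)$ or is conjugate in $G_{\mathrm{reg}}$ to a power of $a$.
   Context: Let $p$ be an odd prime and $X=\{0,1,\dots,p-1\}$, identified with $\mathbb F_p$. $X^*$ is the $p$-regular rooted tree of finite words over $X$; $\mathrm{Aut}(X^* )$ acts on the right; $h^g=g^{-1}hg$, $[x,y]=x^{-1}y^{-1}xy$. Sections $g|_v$ are defined by $(vw)^g=v^g\,w^{g|_v}$. $\mathrm{Stab}(1)$ is the stabiliser of all one-letter words, $\mathrm{Stab}_G(1)=G\cap\mathrm{Stab}(1)$, and $\psi_1\colon\mathrm{Stab}(1)\to\mathrm{Aut}(X^* )^p$, $g\mapsto(g|_0,\dots,g|_{p-1})$, is an isomorphism. Let $a$ be the rooted automorphism acting as $\sigma=(0\,1\,\cdots\,p-1)$ on the first letter and trivially on the remaining letters. Let $\mathbf E\le\mathbb F_p^{p-1}$ be a subspace of dimension $r\ge1$; $E$ is the $r\times(p-1)$ matrix whose rows form a fixed basis of $\mathbf E$, with columns $\mathbf e_1,\dots,\mathbf e_{p-1}$; $\mathbf s_1,\dots,\mathbf s_r$ is the standard basis of $\mathbb F_p^r$. For $\mathbf n\in\mathbb F_p^r$, $b^{\mathbf n}\in\mathrm{Stab}(1)$ is the unique automorphism with $\psi_1(b^{\mathbf n})=(b^{\mathbf n},a^{\mathbf n\cdot\mathbf e_1},\dots,a^{\mathbf n\cdot\mathbf e_{p-1}})$. $G=G_{\mathbf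 E}$ is generated by $a$ and all $b^{\mathbf n}$; it is the constant GGS group if $\mathbf E=\{(\lambda,\dots,\lambda)\mid\lambda\in\mathbb F_p\}$. The regularisation is $G_{\mathrm{reg}}=\langle G\cup\{\underline c\}\rangle$ with $\underline c=\psi_1^{-1}([b^{\mathbf s_1},a],1,\dots,1)$. *)

theory Defs
  imports "HOL-Algebra.Algebra"
begin

text \<open>Words over X = {0,...,p-1}; vertices of the p-regular rooted tree X*.\<close>
definition Wd :: "nat \<Rightarrow> nat list set" where
  "Wd p = {w. \<forall>x\<in>set w. x < p}"

text \<open>The ambient group: bijections of X* (as extensional functions), with
  BijGroup multiplication being composition.  Conjugacy does not depend on
  left/right action conventions.\<close>
abbreviation Sym :: "nat \<Rightarrow> (nat list \<Rightarrow> nat list) monoid" where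
  "Sym p \<equiv> BijGroup (Wd p)"

fun rot :: "nat \<Rightarrow> nat \<Rightarrow> nat list \<Rightarrow> nat list" where
  "rot p k [] = []"
| "rot p k (y # w) = ((y + k) mod p) # w"

definition a_aut :: "nat \<Rightarrow> nat list \<Rightarrow> nat list" where
  "a_aut p = restrict (rot p 1) (Wd p)"

text \<open>E is an r x (p-1) matrix: row i (0 \<le> i < r), column j (1 \<le> j \<le> p-1).
  For n in F_p^r (given by n i, i < r), n . e_j = sum_{i<r} n i * E i j.
  b^n acts by psi_1(b^n) = (b^n, a^{n.e_1}, ..., a^{n.e_{p-1}}).\<close>
fun bfun :: "nat \<Rightarrow> nat \<Rightarrow> (nat \<Rightarrow> nat \<Rightarrow> nat) \<Rightarrow> (nat \<Rightarrow> nat) \<Rightarrow> nat list \<Rightarrow> nat list" where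
  "bfun p r E n [] = []"
| "bfun p r E n (x # w) =
     (if x = 0 then 0 # bfun p r E n w
      else x # rot p (\<Sum>i<r. n i * E i x) w)"

definition b_aut :: "nat \<Rightarrow> nat \<Rightarrow> (nat \<Rightarrow> nat \<Rightarrow> nat) \<Rightarrow> (nat \<Rightarrow> nat) \<Rightarrow> nat list \<Rightarrow> nat list" where
  "b_aut p r E n = restrict (bfun p r E n) (Wd p)"

definition multiGGS :: "nat \<Rightarrow> nat \<Rightarrow> (nat \<Rightarrow> nat \<Rightarrow> nat) \<Rightarrow> (nat list \<Rightarrow> nat list) set" where
  "multiGGS p r E = generate (Sym p)
     (insert (a_aut p) {b_aut p r E n | n. \<forall>i<r. n i < p})"

text \<open>Standard basis vector s_1 (index 0 here).\<close>
definition s1 :: "nat \<Rightarrow> nat" where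
  "s1 = (\<lambda>i. if i = 0 then 1 else 0)"

text \<open>The commutator [b^{s_1}, a] = (b^{s_1})^{-1} a^{-1} b^{s_1} a with right action,
  i.e. as a function a o b o a^{-1} o b^{-1}, which is the BijGroup product below.\<close>
definition comm_ba :: "nat \<Rightarrow> nat \<Rightarrow> (nat \<Rightarrow> nat \<Rightarrow> nat) \<Rightarrow> nat list \<Rightarrow> nat list" where
  "comm_ba p r E =
     a_aut p \<otimes>\<^bsub>Sym p\<^esub> b_aut p r E s1 \<otimes>\<^bsub>Sym p\<^esub> inv\<^bsub>Sym p\<^esub> (a_aut p)
       \<otimes>\<^bsub>Sym p\<^esub> inv\<^bsub>Sym p\<^esub> (b_aut p r E s1)"

fun cfun :: "nat \<Rightarrow> nat \<Rightarrow> (nat \<Rightarrow> nat \<Rightarrow> nat) \<Rightarrow> nat list \<Rightarrow> nat list" where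
  "cfun p r E [] = []"
| "cfun p r E (x # w) = (if x = 0 then 0 # comm_ba p r E w else x # w)"

definition c_aut :: "nat \<Rightarrow> nat \<Rightarrow> (nat \<Rightarrow> nat \<Rightarrow> nat) \<Rightarrow> nat list \<Rightarrow> nat list" where
  "c_aut p r E = restrict (cfun p r E) (Wd p)"

definition Greg :: "nat \<Rightarrow> nat \<Rightarrow> (nat \<Rightarrow> nat \<Rightarrow> nat) \<Rightarrow> (nat list \<Rightarrow> nat list) set" where
  "Greg p r E = generate (Sym p) (insert (c_aut p r E) (multiGGS p r E))"

definition Stab1 :: "nat \<Rightarrow> (nat list \<Rightarrow> nat list) set \<Rightarrow> (nat list \<Rightarrow> nat list) set" where
  "Stab1 p H = {g \<in> H. \<forall>x<p. g [x] = [x]}"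

definition rows_lin_indep :: "nat \<Rightarrow> nat \<Rightarrow> (nat \<Rightarrow> nat \<Rightarrow> nat) \<Rightarrow> bool" where
  "rows_lin_indep p r E \<longleftrightarrow>
     (\<forall>n :: nat \<Rightarrow> nat. (\<forall>i<r. n i < p) \<longrightarrow>
        (\<forall>j\<in>{1..p-1}. (\<Sum>i<r. n i * E i j) mod p = 0) \<longrightarrow> (\<forall>i<r. n i = 0))"

definition row_space :: "nat \<Rightarrow> nat \<Rightarrow> (nat \<Rightarrow> nat \<Rightarrow> nat) \<Rightarrow> (nat \<Rightarrow> nat) set" where
  "row_space p r E = {(\<lambda>j. if j \<in> {1..p-1} then (\<Sum>i<r. n i * E i j) mod p else 0) | n.
                        \<forall>i<r. n i < p}"

definition const_space :: "nat \<Rightarrow> (nat \<Rightarrow> nat) set" where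
  "const_space p = {(\<lambda>j. if j \<in> {1..p-1} then c else 0) | c. c < p}"

end

theory Submission
  imports Defs "HOL-Number_Theory.Number_Theory"
begin

text \<open>Write \<open>g\<close> as a word in \<open>a\<close> and the \<open>b\<^sup>n\<close>. If the exponent sum of \<open>a\<close> is divisible by
  \<open>p\<close>, then \<open>g\<close> fixes the first level. Otherwise \<open>g\<close> permutes the first level cyclically, and
  since \<open>g\<^sup>p = 1\<close> its sections along this cycle multiply to \<open>1\<close>; the automorphism \<open>h\<close> whose
  first-level sections are the partial products of these sections, followed by a suitable power of
  \<open>a\<close>, satisfies \<open>h a\<^sup>k h\<^sup>-\<^sup>1 = g\<close>. To see \<open>h \<in> G_reg\<close>, let \<open>K\<close> be the group of those \<open>k\<close>
  with \<open>\<psi>\<^sub>1\<^sup>-\<^sup>1(k, 1, \<dots>, 1) \<in> G_reg\<close>. It contains \<open>[b\<^sup>s\<^sup>1, a]\<close> by the choice of \<open>c\<close> and is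
  normalised by \<open>G\<close>, so it contains every word whose exponent sums vanish modulo \<open>p\<close>. The
  independence of the rows of \<open>E\<close> shows that the exponent sums of a trivial word vanish, which
  makes the exponent sums of the sections of \<open>h\<close> computable; hence \<open>h\<close> is an element of \<open>G\<close>
  times an element of \<open>K \<times> \<dots> \<times> K \<subseteq> \<psi>\<^sub>1(G_reg)\<close>.\<close>

lemma (in group) inv_mult_cancel_left: "x \<in> carrier G \<Longrightarrow> y \<in> carrier G \<Longrightarrow> inv x \<otimes> (x \<otimes> y) = y"
  by (simp add: m_assoc[symmetric])

lemma (in group) mult_inv_cancel_left: "x \<in> carrier G \<Longrightarrow> y \<in> carrier G \<Longrightarrow> x \<otimes> (inv x \<otimes> y) = y"
  by (simp add: m_assoc[symmetric])

interpretation Sym: group "BijGroup S" for S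
  by (rule group_BijGroup)

lemma BijGroup_maps: "f \<in> carrier (BijGroup S) \<Longrightarrow> u \<in> S \<Longrightarrow> f u \<in> S"
  unfolding BijGroup_def using Bij_imp_funcset by fastforce

lemma BijGroup_mult_apply:
  "f \<in> carrier (BijGroup S) \<Longrightarrow> g \<in> carrier (BijGroup S) \<Longrightarrow> u \<in> S \<Longrightarrow>
   (f \<otimes>\<^bsub>BijGroup S\<^esub> g) u = f (g u)"
  by (simp add: BijGroup_def compose_def)

lemma BijGroup_one_apply: "u \<in> S \<Longrightarrow> \<one>\<^bsub>BijGroup S\<^esub> u = u"
  by (simp add: BijGroup_def)

lemma BijGroup_eqI:
  "f \<in> carrier (BijGroup S) \<Longrightarrow> g \<in> carrier (BijGroup S) \<Longrightarrow> (\<And>u. u \<in> S \<Longrightarrow> f u = g u) \<Longrightarrow> f = g"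
  unfolding BijGroup_def Bij_def by (rule extensionalityI[of f S g]) auto

lemma BijGroup_apply_inv:
  assumes "f \<in> carrier (BijGroup S)" and "u \<in> S"
  shows "f ((inv\<^bsub>BijGroup S\<^esub> f) u) = u"
  using BijGroup_mult_apply[of f S "inv\<^bsub>BijGroup S\<^esub> f" u] assms by (simp add: BijGroup_one_apply)

lemma BijGroup_inv_apply:
  assumes "f \<in> carrier (BijGroup S)" and "u \<in> S"
  shows "(inv\<^bsub>BijGroup S\<^esub> f) (f u) = u"
  using BijGroup_mult_apply[of "inv\<^bsub>BijGroup S\<^esub> f" S f u] assms by (simp add: BijGroup_one_apply)

lemma restrict_in_BijGroup:
  assumes "\<And>u. u \<in> S \<Longrightarrow> f u \<in> S" and "\<And>u. u \<in> S \<Longrightarrow> g u \<in> S"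
    and "\<And>u. u \<in> S \<Longrightarrow> f (g u) = u" and "\<And>u. u \<in> S \<Longrightarrow> g (f u) = u"
  shows "restrict f S \<in> carrier (BijGroup S)"
proof -
  have "bij_betw f S S"
    by (rule bij_betw_byWitness[where f'=g]) (use assms in blast)+
  then show ?thesis
    by (simp add: BijGroup_def Bij_def bij_betw_restrict_eq)
qed

lemma Wd_Cons [simp]: "(x # u \<in> Wd p) = (x < p \<and> u \<in> Wd p)"
  by (auto simp: Wd_def)

lemma Wd_Nil [simp]: "[] \<in> Wd p"
  by (simp add: Wd_def)

lemma add_minus_mod_eq_0: "(0::nat) < p \<Longrightarrow> (a + (p - a mod p)) mod p = 0"
  by (metis add.commute le_add_diff_inverse2 mod_add_left_eq mod_le_divisor mod_self)

lemma add_mod_eq_self: "(x::nat) < p \<Longrightarrow> k mod p = 0 \<Longrightarrow> (x + k) mod p = x"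
  by (metis add.right_neutral mod_add_right_eq mod_less)

lemma add_mod_inj:
  "(y::nat) < p \<Longrightarrow> y' < p \<Longrightarrow> (y + s) mod p = (y' + s) mod p \<Longrightarrow> y = y'"
  by (metis cong_add_rcancel_nat cong_def mod_less)

lemma add_mod_eq_self_iff: "(x::nat) < p \<Longrightarrow> m < p \<Longrightarrow> (x + m) mod p = m \<longleftrightarrow> x = 0"
  using add_mod_inj[where y = x and y' = 0 and s = m] by auto

lemma add_minus_mod_eq_0_iff: "(y::nat) < p \<Longrightarrow> m < p \<Longrightarrow> (y + (p - m)) mod p = 0 \<longleftrightarrow> y = m"
  using add_mod_inj[where y = y and y' = m and s = "p - m"] by auto

lemma sum_mod_eq_0: "(\<And>x. x \<in> A \<Longrightarrow> (f x :: nat) mod p = 0) \<Longrightarrow> sum f A mod p = 0"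
  by (simp add: dvd_eq_mod_eq_0[symmetric] dvd_sum)

lemma rot_Wd: "p > 0 \<Longrightarrow> u \<in> Wd p \<Longrightarrow> rot p k u \<in> Wd p"
  by (cases u) auto

lemma rot_rot: "rot p k (rot p l u) = rot p (k + l) u"
  by (cases u) (simp_all add: mod_add_right_eq ac_simps)

lemma rot_cong_mod: "k mod p = l mod p \<Longrightarrow> rot p k u = rot p l u"
  by (cases u) (auto intro: mod_add_cong)

lemma rot_mod_eq_0: "u \<in> Wd p \<Longrightarrow> k mod p = 0 \<Longrightarrow> rot p k u = u"
  by (cases u) (auto simp: add_mod_eq_self)

lemma add_mod_bij: "(0::nat) < p \<Longrightarrow> bij_betw (\<lambda>y. (y + s) mod p) {..<p} {..<p}"
proof -
  assume p: "0 < p"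
  have inj: "inj_on (\<lambda>y. (y + s) mod p) {..<p}"
    by (auto intro: inj_onI add_mod_inj)
  moreover have "(\<lambda>y. (y + s) mod p) ` {..<p} \<subseteq> {..<p}"
    using p by auto
  ultimately show ?thesis
    by (simp add: bij_betw_def endo_inj_surj)
qed

lemma sum_add_mod: "(0::nat) < p \<Longrightarrow> (\<Sum>x<p. f ((x + s) mod p)) = (\<Sum>y<p. f y)"
  using sum.reindex_bij_betw[OF add_mod_bij] by blast

text \<open>\<open>La c\<close> stands for \<open>a\<^sup>c\<close> and \<open>Lb n\<close> for \<open>b\<^sup>n\<close>; \<open>a_exp\<close> and \<open>b_exp\<close> are the exponent
  sums, i.e. the coordinates of the image of a word in the abelianisation of \<open>G\<close>.\<close>

datatype letter = La nat | Lb "nat \<Rightarrow> nat"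

fun a_exp :: "letter list \<Rightarrow> nat" where
  "a_exp [] = 0"
| "a_exp (La c # w) = c + a_exp w"
| "a_exp (Lb n # w) = a_exp w"

fun b_exp :: "letter list \<Rightarrow> nat \<Rightarrow> nat" where
  "b_exp [] = (\<lambda>i. 0)"
| "b_exp (La c # w) = b_exp w"
| "b_exp (Lb n # w) = (\<lambda>i. n i + b_exp w i)"

fun b_count :: "letter list \<Rightarrow> nat" where
  "b_count [] = 0"
| "b_count (La c # w) = b_count w"
| "b_count (Lb n # w) = Suc (b_count w)"

lemma a_exp_append [simp]: "a_exp (v @ w) = a_exp v + a_exp w"
  by (induction v rule: a_exp.induct) simp_all

lemma b_exp_append [simp]: "b_exp (v @ w) = (\<lambda>i. b_exp v i + b_exp w i)"
  by (induction v rule: a_exp.induct) (simp_all add: add.assoc)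

lemma b_count_append [simp]: "b_count (v @ w) = b_count v + b_count w"
  by (induction v rule: a_exp.induct) simp_all

lemma b_exp_eq_0_if_b_count_eq_0: "b_count w = 0 \<Longrightarrow> b_exp w i = 0"
  by (induction w rule: a_exp.induct) simp_all

definition word_pow :: "letter list \<Rightarrow> nat \<Rightarrow> letter list"
  where "word_pow w k = concat (replicate k w)"

lemma word_pow_Suc: "word_pow w (Suc k) = w @ word_pow w k"
  by (simp add: word_pow_def)

lemma a_exp_word_pow: "a_exp (word_pow w k) = k * a_exp w"
  by (induction k) (simp_all add: word_pow_def)

locale multi_GGS =
  fixes p r :: nat and E :: "nat \<Rightarrow> nat \<Rightarrow> nat"
  assumes prime_p: "Factorial_Ring.prime p"
    and r_ge_1: "r \<ge> 1"
    and rows_indep: "rows_lin_indep p r E"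
begin

lemma p_gt_1: "p > 1"
  using prime_p prime_gt_1_nat by blast

lemma p_pos: "p > 0"
  using p_gt_1 by simp

lemma r_pos: "r > 0"
  using r_ge_1 by simp

definition apow :: "nat \<Rightarrow> nat list \<Rightarrow> nat list"
  where "apow c = restrict (rot p c) (Wd p)"

definition dotE :: "(nat \<Rightarrow> nat) \<Rightarrow> nat \<Rightarrow> nat"
  where "dotE n x = (\<Sum>i<r. n i * E i x)"

lemma apow_in_Sym [simp]: "apow c \<in> carrier (Sym p)"
  unfolding apow_def
proof (rule restrict_in_BijGroup[where g = "rot p (p - c mod p)"])
  fix u assume u: "u \<in> Wd p"
  show "rot p c u \<in> Wd p" "rot p (p - c mod p) u \<in> Wd p"
    using p_pos u by (auto intro: rot_Wd)
  show "rot p c (rot p (p - c mod p) u) = u" "rot p (p - c mod p) (rot p c u) = u"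
    using u add_minus_mod_eq_0[OF p_pos, of c] by (simp_all add: rot_rot rot_mod_eq_0 add.commute)
qed

lemma apow_Cons: "x < p \<Longrightarrow> u \<in> Wd p \<Longrightarrow> apow c (x # u) = ((x + c) mod p) # u"
  by (simp add: apow_def)

lemma apow_Nil: "apow c [] = []"
  by (simp add: apow_def)

lemma apow_apply: "u \<in> Wd p \<Longrightarrow> apow c u = rot p c u"
  by (simp add: apow_def)

lemma apow_mult: "apow c \<otimes>\<^bsub>Sym p\<^esub> apow d = apow (c + d)"
  by (rule BijGroup_eqI[where S = "Wd p"])
    (simp_all add: BijGroup_mult_apply apow_apply rot_Wd[OF p_pos] rot_rot)

lemma apow_cong_mod: "c mod p = d mod p \<Longrightarrow> apow c = apow d"
  unfolding apow_def by (metis rot_cong_mod restrict_ext)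

lemma apow_mod_eq_0: "c mod p = 0 \<Longrightarrow> apow c = \<one>\<^bsub>Sym p\<^esub>"
  unfolding apow_def by (auto simp: BijGroup_def rot_mod_eq_0 intro: restrict_ext)

lemma a_aut_eq: "a_aut p = apow 1"
  by (simp add: a_aut_def apow_def)

lemma a_aut_pow: "a_aut p [^]\<^bsub>Sym p\<^esub> c = apow c"
  by (induction c) (simp_all add: apow_mod_eq_0 apow_mult a_aut_eq)

lemma bfun_Wd: "u \<in> Wd p \<Longrightarrow> bfun p r E n u \<in> Wd p"
  by (induction u) (auto intro: rot_Wd[OF p_pos])

lemma bfun_bfun: "bfun p r E n (bfun p r E m u) = bfun p r E (\<lambda>i. n i + m i) u"
  by (induction u) (simp_all add: rot_rot sum.distrib algebra_simps)

lemma bfun_cong_mod: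
  assumes "\<And>x. 0 < x \<Longrightarrow> x < p \<Longrightarrow> dotE n x mod p = dotE m x mod p"
  shows "u \<in> Wd p \<Longrightarrow> bfun p r E n u = bfun p r E m u"
proof (induction u)
  case (Cons x w)
  then show ?case
    using assms[of x] rot_cong_mod[where k = "dotE n x" and l = "dotE m x"] by (auto simp: dotE_def)
qed simp

lemma bfun_eq_id:
  assumes "\<And>x. 0 < x \<Longrightarrow> x < p \<Longrightarrow> dotE n x mod p = 0"
  shows "u \<in> Wd p \<Longrightarrow> bfun p r E n u = u"
proof (induction u)
  case (Cons x w)
  then show ?case
    using assms[of x] rot_mod_eq_0[where k = "dotE n x"] by (auto simp: dotE_def)
qed simp

definition vneg :: "(nat \<Rightarrow> nat) \<Rightarrow> nat \<Rightarrow> nat"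
  where "vneg n = (\<lambda>i. p - n i mod p)"

lemma dotE_add: "dotE (\<lambda>i. n i + m i) x = dotE n x + dotE m x"
  by (simp add: dotE_def sum.distrib algebra_simps)

lemma dotE_mod: "dotE (\<lambda>i. n i mod p) x mod p = dotE n x mod p"
proof -
  have "[(\<Sum>i<r. n i mod p * E i x) = (\<Sum>i<r. n i * E i x)] (mod p)"
    by (rule cong_sum) (simp add: cong_def mod_mult_left_eq)
  then show ?thesis
    by (simp add: cong_def dotE_def)
qed

lemma dotE_add_vneg: "dotE (\<lambda>i. n i + vneg n i) x mod p = 0"
proof -
  have "p dvd (n i + vneg n i) * E i x" for i
    using add_minus_mod_eq_0[OF p_pos, of "n i"] by (simp add: vneg_def dvd_eq_mod_eq_0[symmetric])
  then show ?thesis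
    unfolding dotE_def by (simp add: dvd_eq_mod_eq_0[symmetric] dvd_sum)
qed

lemma b_aut_in_Sym [simp]: "b_aut p r E n \<in> carrier (Sym p)"
  unfolding b_aut_def
proof (rule restrict_in_BijGroup[where g = "bfun p r E (vneg n)"])
  fix u assume u: "u \<in> Wd p"
  show "bfun p r E n u \<in> Wd p" "bfun p r E (vneg n) u \<in> Wd p"
    using u by (auto intro: bfun_Wd)
  show "bfun p r E n (bfun p r E (vneg n) u) = u" "bfun p r E (vneg n) (bfun p r E n u) = u"
    using u dotE_add_vneg by (auto simp: bfun_bfun add.commute intro!: bfun_eq_id)
qed

lemma b_aut_Cons_0: "u \<in> Wd p \<Longrightarrow> b_aut p r E n (0 # u) = 0 # b_aut p r E n u"
  using p_pos by (simp add: b_aut_def)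

lemma b_aut_Cons:
  "0 < x \<Longrightarrow> x < p \<Longrightarrow> u \<in> Wd p \<Longrightarrow> b_aut p r E n (x # u) = x # apow (dotE n x) u"
  by (simp add: b_aut_def apow_def dotE_def)

lemma b_aut_Nil: "b_aut p r E n [] = []"
  by (simp add: b_aut_def)

lemma b_aut_mult: "b_aut p r E n \<otimes>\<^bsub>Sym p\<^esub> b_aut p r E m = b_aut p r E (\<lambda>i. n i + m i)"
  by (rule BijGroup_eqI[where S = "Wd p"]) (simp_all add: BijGroup_mult_apply, simp add: b_aut_def bfun_Wd bfun_bfun)

lemma b_aut_cong_mod:
  "(\<And>x. 0 < x \<Longrightarrow> x < p \<Longrightarrow> dotE n x mod p = dotE m x mod p) \<Longrightarrow> b_aut p r E n = b_aut p r E m"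
  unfolding b_aut_def by (metis bfun_cong_mod restrict_ext)

lemma b_aut_eq_one:
  "(\<And>x. 0 < x \<Longrightarrow> x < p \<Longrightarrow> dotE n x mod p = 0) \<Longrightarrow> b_aut p r E n = \<one>\<^bsub>Sym p\<^esub>"
  unfolding b_aut_def by (auto simp: BijGroup_def bfun_eq_id intro: restrict_ext)

fun eval_letter :: "letter \<Rightarrow> nat list \<Rightarrow> nat list" where
  "eval_letter (La c) = apow c"
| "eval_letter (Lb n) = b_aut p r E n"

fun eval_word :: "letter list \<Rightarrow> nat list \<Rightarrow> nat list" where
  "eval_word [] = \<one>\<^bsub>Sym p\<^esub>"
| "eval_word (l # w) = eval_letter l \<otimes>\<^bsub>Sym p\<^esub> eval_word w"

text \<open>Words act from right to left, so the section of \<open>l # w\<close> at \<open>x\<close> is the section of \<open>l\<close> at the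
  image \<open>(x + a_exp w) mod p\<close> of \<open>x\<close> under \<open>w\<close>, followed by the section of \<open>w\<close> at \<open>x\<close>.\<close>

fun letter_section :: "letter \<Rightarrow> nat \<Rightarrow> letter list" where
  "letter_section (La c) y = []"
| "letter_section (Lb n) y = (if y = 0 then [Lb n] else [La (dotE n y)])"

fun word_section :: "letter list \<Rightarrow> nat \<Rightarrow> letter list" where
  "word_section [] x = []"
| "word_section (l # w) x = letter_section l ((x + a_exp w) mod p) @ word_section w x"

lemma eval_letter_in_Sym [simp]: "eval_letter l \<in> carrier (Sym p)"
  by (cases l) simp_all

lemma eval_word_in_Sym [simp]: "eval_word w \<in> carrier (Sym p)"
  by (induction w) simp_all

lemma eval_word_append: "eval_word (v @ w) = eval_word v \<otimes>\<^bsub>Sym p\<^esub> eval_word w"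
  by (induction v) (simp_all add: Sym.m_assoc)

lemma eval_word_single [simp]: "eval_word [l] = eval_letter l"
  by simp

lemma eval_word_append_apply: "u \<in> Wd p \<Longrightarrow> eval_word (v @ w) u = eval_word v (eval_word w u)"
  by (simp add: eval_word_append BijGroup_mult_apply)

lemma eval_word_maps: "u \<in> Wd p \<Longrightarrow> eval_word w u \<in> Wd p"
  by (rule BijGroup_maps[OF eval_word_in_Sym])

lemma eval_word_Nil: "eval_word w [] = []"
proof (induction w)
  case (Cons l w)
  then show ?case
    by (cases l) (simp_all add: BijGroup_mult_apply apow_Nil b_aut_Nil)
qed (simp add: BijGroup_one_apply)

lemma eval_word_Cons:
  "x < p \<Longrightarrow> u \<in> Wd p \<Longrightarrow>
   eval_word w (x # u) = ((x + a_exp w) mod p) # eval_word (word_section w x) u"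
proof (induction w)
  case (Cons l w)
  define y where "y = (x + a_exp w) mod p"
  define v where "v = eval_word (word_section w x) u"
  have y: "y < p" and v: "v \<in> Wd p"
    using p_pos Cons.prems eval_word_maps by (simp_all add: y_def v_def)
  have "eval_word (l # w) (x # u) = eval_letter l (y # v)"
    using Cons by (simp add: BijGroup_mult_apply y_def v_def)
  moreover have "eval_word (word_section (l # w) x) u = eval_word (letter_section l y) v"
    using Cons.prems by (simp add: eval_word_append_apply y_def v_def)
  ultimately show ?case
    using y v by (cases l) (auto simp: apow_Cons b_aut_Cons_0 b_aut_Cons y_def
        mod_add_left_eq mod_add_right_eq ac_simps BijGroup_one_apply)
qed (simp add: BijGroup_one_apply)

section \<open>Trivial words have trivial exponent sums\<close>

lemma dotE_s1: "dotE s1 x = E 0 x"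
proof -
  have "dotE s1 x = (\<Sum>i<r. if i = 0 then E 0 x else 0)"
    unfolding dotE_def s1_def by (intro sum.cong) auto
  then show ?thesis
    using r_ge_1 by (simp add: sum.delta)
qed

lemma rows_indep_mod:
  assumes "\<And>d. 0 < d \<Longrightarrow> d < p \<Longrightarrow> dotE n d mod p = 0" and "i < r"
  shows "n i mod p = 0"
proof -
  have "\<forall>j\<in>{1..p-1}. dotE (\<lambda>i. n i mod p) j mod p = 0"
  proof
    fix j assume "j \<in> {1..p-1}"
    then have "0 < j" "j < p" by auto
    then show "dotE (\<lambda>i. n i mod p) j mod p = 0"
      by (simp only: dotE_mod assms(1))
  qed
  moreover have "\<forall>i<r. n i mod p < p"
    using p_pos by simp
  ultimately show ?thesis
    using rows_indep[unfolded rows_lin_indep_def, rule_format, of "\<lambda>i. n i mod p" i] assms(2)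
    unfolding dotE_def by blast
qed

lemma E_row_0_nonzero: "\<exists>m. 0 < m \<and> m < p \<and> E 0 m mod p \<noteq> 0"
proof (rule ccontr)
  assume "\<not> ?thesis"
  then have "dotE s1 d mod p = 0" if "0 < d" "d < p" for d
    using that by (auto simp: dotE_s1)
  then have "s1 0 mod p = 0"
    using r_pos by (rule rows_indep_mod)
  then show False
    using p_gt_1 by (simp add: s1_def)
qed

lemma sum_letter_section:
  assumes "f [] = 0" and "\<And>c. f [La c] = 0"
  shows "(\<Sum>y<p. f (letter_section l y)) = (f [l] :: nat)"
proof (cases l)
  case (Lb n)
  have "(\<Sum>y<p. f (letter_section l y)) = (\<Sum>y<p. if y = 0 then f [Lb n] else 0)"
    using Lb assms by (intro sum.cong) auto
  then show ?thesis
    using Lb p_pos by (simp add: sum.delta)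
qed (simp add: assms)

lemma sum_word_section:
  assumes add: "\<And>v w. f (v @ w) = f v + f w" and "f [] = 0" and "\<And>c. f [La c] = 0"
  shows "(\<Sum>x<p. f (word_section w x)) = (f w :: nat)"
proof (induction w)
  case (Cons l w)
  have "(\<Sum>x<p. f (word_section (l # w) x)) = (\<Sum>x<p. f (letter_section l ((x + a_exp w) mod p))) + f w"
    using Cons.IH by (simp add: add sum.distrib)
  also have "(\<Sum>x<p. f (letter_section l ((x + a_exp w) mod p))) = (\<Sum>y<p. f (letter_section l y))"
    by (rule sum_add_mod[OF p_pos])
  also have "\<dots> = f [l]"
    by (rule sum_letter_section) (use assms in simp_all)
  finally show ?case
    using add[of "[l]" w] by simp
qed (use assms(2) in simp)

lemma sum_word_section_b_exp: "(\<Sum>x<p. b_exp (word_section w x) i) = b_exp w i"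
  by (rule sum_word_section[where f = "\<lambda>v. b_exp v i"]) simp_all

lemma sum_word_section_b_count: "(\<Sum>x<p. b_count (word_section w x)) = b_count w"
  by (rule sum_word_section[where f = b_count]) simp_all

text \<open>\<open>dotE0 n d\<close> is the exponent of \<open>a\<close> that a letter \<open>b\<^sup>n\<close> sitting at a vertex \<open>y\<close>
  contributes to the section at the vertex \<open>y + d\<close>.\<close>

definition dotE0 :: "(nat \<Rightarrow> nat) \<Rightarrow> nat \<Rightarrow> nat"
  where "dotE0 n d = (if d = 0 then 0 else dotE n d)"

definition diff_mod :: "nat \<Rightarrow> nat \<Rightarrow> nat"
  where "diff_mod x y = (x + p - y) mod p"

lemma dotE0_add: "dotE0 (\<lambda>i. m i + n i) d = dotE0 m d + dotE0 n d"
  by (simp add: dotE0_def dotE_add)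

lemma dotE0_zero: "dotE0 (\<lambda>i. 0) d = 0"
  by (simp add: dotE0_def dotE_def)

lemma dotE0_cong_mod:
  "(\<And>i. i < r \<Longrightarrow> m i mod p = n i mod p) \<Longrightarrow> dotE0 m d mod p = dotE0 n d mod p"
proof -
  assume "\<And>i. i < r \<Longrightarrow> m i mod p = n i mod p"
  then have "[(\<Sum>i<r. m i * E i d) = (\<Sum>i<r. n i * E i d)] (mod p)"
    by (intro cong_sum) (auto simp: cong_def intro: mod_mult_cong)
  then show ?thesis
    by (simp add: dotE0_def dotE_def cong_def)
qed

lemma int_diff_mod: "y < p \<Longrightarrow> int (diff_mod x y) = (int x - int y) mod int p"
proof -
  assume "y < p"
  then have "int (x + p - y) = (int x - int y) + int p"
    by simp
  then show ?thesis
    by (simp add: diff_mod_def of_nat_mod)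
qed

lemma diff_mod_add_mod: "y < p \<Longrightarrow> diff_mod ((x + s) mod p) ((y + s) mod p) = diff_mod x y"
proof -
  assume "y < p"
  then have "int (diff_mod ((x + s) mod p) ((y + s) mod p)) = int (diff_mod x y)"
    using p_pos by (simp add: int_diff_mod of_nat_mod mod_diff_eq)
  then show ?thesis
    by simp
qed

lemma diff_mod_0: "x < p \<Longrightarrow> diff_mod x 0 = x"
  by (simp add: diff_mod_def)

lemma diff_mod_add_self: "x < p \<Longrightarrow> d < p \<Longrightarrow> diff_mod ((x + d) mod p) x = d"
  using diff_mod_add_mod[of 0 d x] p_pos by (simp add: diff_mod_0 add.commute)

lemma a_exp_letter_section:
  assumes "x < p"
  shows "a_exp (letter_section l ((x + s) mod p)) =
    (\<Sum>y<p. dotE0 (b_exp (letter_section l ((y + s) mod p))) (diff_mod x y))"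
proof -
  define x' where "x' = (x + s) mod p"
  have x': "x' < p"
    using p_pos by (simp add: x'_def)
  define g where "g z = dotE0 (b_exp (letter_section l z)) (diff_mod x' z)" for z
  have "(\<Sum>y<p. dotE0 (b_exp (letter_section l ((y + s) mod p))) (diff_mod x y)) = (\<Sum>y<p. g ((y + s) mod p))"
    by (intro sum.cong) (simp_all add: g_def x'_def diff_mod_add_mod)
  also have "\<dots> = (\<Sum>z<p. g z)"
    by (rule sum_add_mod[OF p_pos])
  also have "\<dots> = a_exp (letter_section l x')"
  proof (cases l)
    case (La c)
    then show ?thesis
      by (simp add: g_def dotE0_zero)
  next
    case (Lb n)
    then have "(\<Sum>z<p. g z) = (\<Sum>z<p. if z = 0 then dotE0 n x' else 0)"
      using x' by (intro sum.cong) (auto simp: g_def diff_mod_0 dotE0_zero)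
    then show ?thesis
      using Lb p_pos by (simp add: dotE0_def)
  qed
  finally show ?thesis
    by (simp add: x'_def)
qed

lemma a_exp_word_section:
  "x < p \<Longrightarrow> a_exp (word_section w x) mod p = (\<Sum>y<p. dotE0 (b_exp (word_section w y)) (diff_mod x y)) mod p"
proof (induction w)
  case (Cons l w)
  define A where "A = a_exp (letter_section l ((x + a_exp w) mod p))"
  have sum_eq: "(\<Sum>y<p. dotE0 (b_exp (word_section (l # w) y)) (diff_mod x y)) =
      A + (\<Sum>y<p. dotE0 (b_exp (word_section w y)) (diff_mod x y))"
    using a_exp_letter_section[OF Cons.prems] by (simp add: A_def dotE0_add sum.distrib)
  have "a_exp (word_section (l # w) x) mod p = (A + a_exp (word_section w x)) mod p"
    by (simp add: A_def)
  also have "\<dots> = (A + (\<Sum>y<p. dotE0 (b_exp (word_section w y)) (diff_mod x y))) mod p"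
    using Cons.IH[OF Cons.prems] by (rule mod_add_cong[OF refl])
  finally show ?case
    by (simp only: sum_eq)
qed (simp add: dotE0_zero)

lemma a_exp_mod_eq_0_if_eval_word_eq_one:
  assumes "eval_word w = \<one>\<^bsub>Sym p\<^esub>"
  shows "a_exp w mod p = 0"
proof -
  have "eval_word w [0] = [0]"
    using assms p_pos by (simp add: BijGroup_one_apply)
  then show ?thesis
    using eval_word_Cons[of 0 "[]" w] p_pos by (simp add: eval_word_Nil)
qed

lemma eval_word_section_eq_one:
  assumes "eval_word w = \<one>\<^bsub>Sym p\<^esub>" and "x < p"
  shows "eval_word (word_section w x) = \<one>\<^bsub>Sym p\<^esub>"
proof (rule BijGroup_eqI[where S = "Wd p"])
  fix u assume u: "u \<in> Wd p"
  then have "eval_word w (x # u) = x # u"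
    using assms by (simp add: BijGroup_one_apply)
  then show "eval_word (word_section w x) u = \<one>\<^bsub>Sym p\<^esub> u"
    using eval_word_Cons[OF assms(2) u] u by (simp add: BijGroup_one_apply)
qed simp_all

text \<open>If all letters \<open>b\<^sup>n\<close> of a trivial word end up in the section at a single vertex \<open>x\<^sub>0\<close>,
  then the section at \<open>x\<^sub>0 + d\<close> has \<open>a\<close>-exponent \<open>dotE (b_exp w) d\<close>; these all vanish, and the
  independence of the rows of \<open>E\<close> does the rest.\<close>

lemma b_exp_mod_eq_0_if_concentrated:
  assumes one: "eval_word w = \<one>\<^bsub>Sym p\<^esub>" and x0: "x0 < p" and i: "i < r"
    and others: "\<And>x. x < p \<Longrightarrow> x \<noteq> x0 \<Longrightarrow> b_count (word_section w x) = 0"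
  shows "b_exp w i mod p = 0"
proof (rule rows_indep_mod[OF _ i])
  have others_b_exp: "b_exp (word_section w x) = (\<lambda>j. 0)" if "x < p" "x \<noteq> x0" for x
    using others[OF that] by (auto intro: b_exp_eq_0_if_b_count_eq_0)
  have "b_exp (word_section w x0) j = b_exp w j" for j
    using sum_word_section_b_exp[of w j] x0 others_b_exp by (simp add: sum.remove)
  then have b_exp_x0: "b_exp (word_section w x0) = b_exp w"
    by (rule ext)
  fix d assume d: "0 < d" "d < p"
  define x where "x = (x0 + d) mod p"
  have x: "x < p" "x \<noteq> x0"
    using p_pos d x0 add_mod_eq_self_iff[where x = d and m = x0] by (simp_all add: x_def add.commute)
  have "(\<Sum>y<p. dotE0 (b_exp (word_section w y)) (diff_mod x y)) =
      (\<Sum>y<p. if y = x0 then dotE0 (b_exp w) (diff_mod x x0) else 0)"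
    using others_b_exp b_exp_x0 by (intro sum.cong) (auto simp: dotE0_zero)
  also have "\<dots> = dotE (b_exp w) d"
    using x0 d by (simp add: x_def diff_mod_add_self dotE0_def)
  finally show "dotE (b_exp w) d mod p = 0"
    using a_exp_word_section[OF x(1), of w]
      a_exp_mod_eq_0_if_eval_word_eq_one[OF eval_word_section_eq_one[OF one x(1)]] by simp
qed

lemma b_exp_mod_eq_0_if_eval_word_eq_one:
  "eval_word w = \<one>\<^bsub>Sym p\<^esub> \<Longrightarrow> i < r \<Longrightarrow> b_exp w i mod p = 0"
proof (induction "b_count w" arbitrary: w rule: less_induct)
  case less
  show ?case
  proof (cases "\<forall>x<p. b_count (word_section w x) < b_count w")
    case True
    then have "(\<Sum>x<p. b_exp (word_section w x) i) mod p = 0"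
      using less eval_word_section_eq_one by (intro sum_mod_eq_0) auto
    then show ?thesis
      by (simp add: sum_word_section_b_exp)
  next
    case False
    then obtain x0 where x0: "x0 < p" and ge: "b_count w \<le> b_count (word_section w x0)"
      by (auto simp: not_less)
    have "b_count (word_section w x0) + (\<Sum>x\<in>{..<p} - {x0}. b_count (word_section w x)) = b_count w"
      using sum_word_section_b_count[of w] x0 by (simp add: sum.remove)
    then have "(\<Sum>x\<in>{..<p} - {x0}. b_count (word_section w x)) = 0"
      using ge by linarith
    then have "b_count (word_section w x) = 0" if "x < p" "x \<noteq> x0" for x
      using that by simp
    then show ?thesis
      using b_exp_mod_eq_0_if_concentrated less.prems x0 by blast
  qed
qed

section \<open>Automorphisms given by their first-level sections\<close>

text \<open>\<open>tuple s\<close> is \<open>\<psi>\<^sub>1\<^sup>-\<^sup>1(s 0, \<dots>, s (p - 1))\<close>.\<close>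

definition tuple :: "(nat \<Rightarrow> nat list \<Rightarrow> nat list) \<Rightarrow> nat list \<Rightarrow> nat list"
  where "tuple s = restrict (\<lambda>v. case v of [] \<Rightarrow> [] | y # u \<Rightarrow> y # s y u) (Wd p)"

definition single_at :: "nat \<Rightarrow> (nat list \<Rightarrow> nat list) \<Rightarrow> nat list \<Rightarrow> nat list"
  where "single_at x k = tuple (\<lambda>y. if y = x then k else \<one>\<^bsub>Sym p\<^esub>)"

lemma tuple_Cons: "x < p \<Longrightarrow> u \<in> Wd p \<Longrightarrow> tuple s (x # u) = x # s x u"
  by (simp add: tuple_def)

lemma tuple_Nil: "tuple s [] = []"
  by (simp add: tuple_def)

lemma tuple_in_Sym: "(\<And>y. y < p \<Longrightarrow> s y \<in> carrier (Sym p)) \<Longrightarrow> tuple s \<in> carrier (Sym p)"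
  unfolding tuple_def
  by (rule restrict_in_BijGroup[where g = "\<lambda>v. case v of [] \<Rightarrow> [] | y # u \<Rightarrow> y # (inv\<^bsub>Sym p\<^esub> (s y)) u"])
    (auto split: list.split simp: BijGroup_maps BijGroup_apply_inv BijGroup_inv_apply)

lemma tuple_eqI:
  assumes "f \<in> carrier (Sym p)" and "\<And>y. y < p \<Longrightarrow> s y \<in> carrier (Sym p)" and "f [] = []"
    and "\<And>x u. x < p \<Longrightarrow> u \<in> Wd p \<Longrightarrow> f (x # u) = x # s x u"
  shows "f = tuple s"
proof (rule BijGroup_eqI[where S = "Wd p"])
  fix v assume "v \<in> Wd p"
  then show "f v = tuple s v"
    using assms(3,4) by (cases v) (simp_all add: tuple_Cons tuple_Nil)
qed (use assms(1,2) tuple_in_Sym in auto)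

lemma tuple_mult:
  assumes "\<And>y. y < p \<Longrightarrow> s y \<in> carrier (Sym p)" and "\<And>y. y < p \<Longrightarrow> t y \<in> carrier (Sym p)"
  shows "tuple s \<otimes>\<^bsub>Sym p\<^esub> tuple t = tuple (\<lambda>y. s y \<otimes>\<^bsub>Sym p\<^esub> t y)"
  using assms by (intro tuple_eqI)
    (simp_all add: tuple_in_Sym BijGroup_mult_apply tuple_Cons tuple_Nil BijGroup_maps)

lemma tuple_cong: "(\<And>y. y < p \<Longrightarrow> s y = t y) \<Longrightarrow> tuple s = tuple t"
  unfolding tuple_def by (intro restrict_ext) (auto split: list.split)

lemma tuple_one: "tuple (\<lambda>y. \<one>\<^bsub>Sym p\<^esub>) = \<one>\<^bsub>Sym p\<^esub>"
  by (rule sym, rule tuple_eqI) (simp_all add: BijGroup_one_apply)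

lemma tuple_inv:
  assumes "\<And>y. y < p \<Longrightarrow> s y \<in> carrier (Sym p)"
  shows "inv\<^bsub>Sym p\<^esub> (tuple s) = tuple (\<lambda>y. inv\<^bsub>Sym p\<^esub> (s y))"
proof -
  have "tuple (\<lambda>y. inv\<^bsub>Sym p\<^esub> (s y)) \<otimes>\<^bsub>Sym p\<^esub> tuple s = tuple (\<lambda>y. \<one>\<^bsub>Sym p\<^esub>)"
    using assms by (simp add: tuple_mult cong: tuple_cong)
  then show ?thesis
    using assms by (intro Sym.inv_equality tuple_in_Sym) (simp_all add: tuple_one)
qed

lemma single_at_in_Sym: "k \<in> carrier (Sym p) \<Longrightarrow> single_at x k \<in> carrier (Sym p)"
  unfolding single_at_def by (intro tuple_in_Sym) simp

lemma single_at_Cons: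
  "y < p \<Longrightarrow> u \<in> Wd p \<Longrightarrow> single_at x k (y # u) = y # (if y = x then k u else u)"
  by (simp add: single_at_def tuple_Cons BijGroup_one_apply)

lemma single_at_Nil: "single_at x k [] = []"
  by (simp add: single_at_def tuple_Nil)

lemma single_at_mult:
  "k \<in> carrier (Sym p) \<Longrightarrow> l \<in> carrier (Sym p) \<Longrightarrow>
   single_at x k \<otimes>\<^bsub>Sym p\<^esub> single_at x l = single_at x (k \<otimes>\<^bsub>Sym p\<^esub> l)"
  unfolding single_at_def by (subst tuple_mult) (auto intro: tuple_cong)

lemma single_at_inv:
  "k \<in> carrier (Sym p) \<Longrightarrow> inv\<^bsub>Sym p\<^esub> (single_at x k) = single_at x (inv\<^bsub>Sym p\<^esub> k)"
  unfolding single_at_def by (subst tuple_inv) (auto intro: tuple_cong)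

lemma single_at_one: "single_at x \<one>\<^bsub>Sym p\<^esub> = \<one>\<^bsub>Sym p\<^esub>"
  unfolding single_at_def by (simp add: tuple_one)

lemma eval_word_eq_tuple:
  "a_exp w mod p = 0 \<Longrightarrow> eval_word w = tuple (\<lambda>y. eval_word (word_section w y))"
  by (rule tuple_eqI) (simp_all add: eval_word_Nil eval_word_Cons add_mod_eq_self)

lemma b_aut_eq_tuple: "b_aut p r E n = tuple (\<lambda>y. if y = 0 then b_aut p r E n else apow (dotE n y))"
  by (rule tuple_eqI) (simp_all add: b_aut_Nil b_aut_Cons_0 b_aut_Cons)

lemma c_aut_eq_single_at: "c_aut p r E = single_at 0 (comm_ba p r E)"
  unfolding c_aut_def single_at_def tuple_def
  by (intro restrict_ext) (auto split: list.split simp: BijGroup_one_apply)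

abbreviation G where "G \<equiv> multiGGS p r E"
abbreviation G_reg where "G_reg \<equiv> Greg p r E"

lemma subgroup_G: "subgroup G (Sym p)"
  unfolding multiGGS_def using a_aut_eq by (intro Sym.generate_is_subgroup) auto

lemma comm_ba_in_Sym: "comm_ba p r E \<in> carrier (Sym p)"
  by (simp add: comm_ba_def a_aut_eq)

lemma c_aut_in_Sym: "c_aut p r E \<in> carrier (Sym p)"
  by (simp add: c_aut_eq_single_at single_at_in_Sym comm_ba_in_Sym)

lemma subgroup_G_reg: "subgroup G_reg (Sym p)"
  unfolding Greg_def using c_aut_in_Sym subgroup.subset[OF subgroup_G]
  by (intro Sym.generate_is_subgroup) auto

lemma G_subset_G_reg: "g \<in> G \<Longrightarrow> g \<in> G_reg"
  unfolding Greg_def by (rule generate.incl) simp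

lemma c_aut_in_G_reg: "c_aut p r E \<in> G_reg"
  unfolding Greg_def by (rule generate.incl) simp

lemma apow_in_G: "apow c \<in> G"
proof (induction c)
  case 0
  then show ?case
    using subgroup.one_closed[OF subgroup_G] by (simp add: apow_mod_eq_0)
next
  case (Suc c)
  have "apow 1 \<in> G"
    unfolding multiGGS_def a_aut_eq[symmetric] by (rule generate.incl) simp
  then show ?case
    using subgroup.m_closed[OF subgroup_G Suc.IH, of "apow 1"] by (simp add: apow_mult)
qed

lemma b_aut_in_G: "b_aut p r E n \<in> G"
proof -
  have "b_aut p r E n = b_aut p r E (\<lambda>i. n i mod p)"
    using dotE_mod by (intro b_aut_cong_mod) simp
  also have "\<dots> \<in> G"
    unfolding multiGGS_def using p_pos by (intro generate.incl) auto
  finally show ?thesis .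
qed

lemma eval_word_in_G: "eval_word w \<in> G"
proof (induction w)
  case (Cons l w)
  then show ?case
    by (cases l) (simp_all add: subgroup.m_closed[OF subgroup_G] apow_in_G b_aut_in_G)
qed (simp add: subgroup.one_closed[OF subgroup_G])

fun inv_letter :: "letter \<Rightarrow> letter" where
  "inv_letter (La c) = La (p - c mod p)"
| "inv_letter (Lb n) = Lb (vneg n)"

definition inv_word :: "letter list \<Rightarrow> letter list"
  where "inv_word w = rev (map inv_letter w)"

lemma eval_inv_letter: "eval_letter (inv_letter l) = inv\<^bsub>Sym p\<^esub> (eval_letter l)"
proof (rule sym, rule Sym.inv_equality)
  show "eval_letter (inv_letter l) \<otimes>\<^bsub>Sym p\<^esub> eval_letter l = \<one>\<^bsub>Sym p\<^esub>"
  proof (cases l)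
    case (La c)
    then show ?thesis
      using add_minus_mod_eq_0[OF p_pos, of c] by (simp add: apow_mult apow_mod_eq_0 add.commute)
  next
    case (Lb n)
    then show ?thesis
      using dotE_add_vneg[of n] by (simp add: b_aut_mult add.commute b_aut_eq_one)
  qed
qed simp_all

lemma eval_inv_word: "eval_word (inv_word w) = inv\<^bsub>Sym p\<^esub> (eval_word w)"
  by (induction w) (simp_all add: inv_word_def eval_word_append eval_inv_letter Sym.inv_mult_group)

lemma a_exp_inv_word: "(a_exp (inv_word w) + a_exp w) mod p = 0"
proof (induction w)
  case (Cons l w)
  have "p dvd a_exp [inv_letter l] + a_exp [l]"
    using add_minus_mod_eq_0[OF p_pos] by (cases l) (simp_all add: dvd_eq_mod_eq_0 add.commute)
  moreover have "a_exp (inv_word (l # w)) + a_exp (l # w) =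
      (a_exp (inv_word w) + a_exp w) + (a_exp [inv_letter l] + a_exp [l])"
    by (cases l) (simp_all add: inv_word_def)
  ultimately show ?case
    using Cons.IH by (simp add: dvd_eq_mod_eq_0[symmetric])
qed (simp add: inv_word_def)

lemma b_exp_inv_word: "(b_exp (inv_word w) i + b_exp w i) mod p = 0"
proof (induction w)
  case (Cons l w)
  have "p dvd b_exp [inv_letter l] i + b_exp [l] i"
    using add_minus_mod_eq_0[OF p_pos] by (cases l) (simp_all add: dvd_eq_mod_eq_0 add.commute vneg_def)
  moreover have "b_exp (inv_word (l # w)) i + b_exp (l # w) i =
      (b_exp (inv_word w) i + b_exp w i) + (b_exp [inv_letter l] i + b_exp [l] i)"
    by (cases l) (simp_all add: inv_word_def)
  ultimately show ?case
    using Cons.IH by (simp add: dvd_eq_mod_eq_0[symmetric])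
qed (simp add: inv_word_def)

lemma G_eq_eval_word: "g \<in> G \<Longrightarrow> \<exists>w. g = eval_word w"
  unfolding multiGGS_def
proof (induction rule: generate.induct)
  case one
  show ?case
    by (rule exI[of _ "[]"]) simp
next
  case (incl h)
  then obtain l where "h = eval_letter l"
    using a_aut_eq by (auto intro: eval_letter.simps[symmetric])
  then show ?case
    by (metis eval_word_single)
next
  case (inv h)
  then obtain l where "h = eval_letter l"
    using a_aut_eq by (auto intro: eval_letter.simps[symmetric])
  then show ?case
    by (metis eval_inv_letter eval_word_single)
next
  case (eng h1 h2)
  then show ?case
    by (metis eval_word_append)
qed

section \<open>The subgroup \<open>K\<close>\<close>

definition K :: "(nat list \<Rightarrow> nat list) set"
  where "K = {k \<in> carrier (Sym p). single_at 0 k \<in> G_reg}"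

lemma subgroup_K: "subgroup K (Sym p)"
proof (rule Sym.subgroupI)
  show "K \<noteq> {}"
    using subgroup.one_closed[OF subgroup_G_reg] single_at_one by (auto simp: K_def)
  show "inv\<^bsub>Sym p\<^esub> k \<in> K" if "k \<in> K" for k
    using that subgroup.m_inv_closed[OF subgroup_G_reg] by (auto simp: K_def single_at_inv[symmetric])
  show "k \<otimes>\<^bsub>Sym p\<^esub> l \<in> K" if "k \<in> K" "l \<in> K" for k l
    using that subgroup.m_closed[OF subgroup_G_reg] by (auto simp: K_def single_at_mult[symmetric])
qed (auto simp: K_def)

lemma K_in_Sym: "k \<in> K \<Longrightarrow> k \<in> carrier (Sym p)"
  by (simp add: K_def)

lemma apow_mult_single_at_0:
  assumes m: "m < p" and k: "k \<in> carrier (Sym p)"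
  shows "apow m \<otimes>\<^bsub>Sym p\<^esub> single_at 0 k = single_at m k \<otimes>\<^bsub>Sym p\<^esub> apow m"
proof (rule BijGroup_eqI[where S = "Wd p"])
  fix v assume v: "v \<in> Wd p"
  show "(apow m \<otimes>\<^bsub>Sym p\<^esub> single_at 0 k) v = (single_at m k \<otimes>\<^bsub>Sym p\<^esub> apow m) v"
  proof (cases v)
    case Nil
    then show ?thesis
      using k by (simp add: BijGroup_mult_apply single_at_in_Sym apow_Nil single_at_Nil)
  next
    case (Cons x u)
    then have "x < p" "u \<in> Wd p" "k u \<in> Wd p"
      using v k BijGroup_maps by auto
    then show ?thesis
      using Cons k m p_pos
      by (simp add: BijGroup_mult_apply single_at_in_Sym single_at_Cons apow_Cons add_mod_eq_self_iff)
  qed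
qed (use k single_at_in_Sym in auto)

lemma single_at_in_G_reg_iff:
  assumes m: "m < p" and k: "k \<in> carrier (Sym p)"
  shows "single_at m k \<in> G_reg \<longleftrightarrow> k \<in> K"
proof -
  note shift = apow_mult_single_at_0[OF assms]
  have "single_at m k = (apow m \<otimes>\<^bsub>Sym p\<^esub> single_at 0 k) \<otimes>\<^bsub>Sym p\<^esub> inv\<^bsub>Sym p\<^esub> (apow m)"
    unfolding shift using k by (simp add: single_at_in_Sym Sym.m_assoc)
  moreover have "single_at 0 k = inv\<^bsub>Sym p\<^esub> (apow m) \<otimes>\<^bsub>Sym p\<^esub> (single_at m k \<otimes>\<^bsub>Sym p\<^esub> apow m)"
    unfolding shift[symmetric] using k by (simp add: single_at_in_Sym Sym.m_assoc[symmetric])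
  moreover have "apow m \<in> G_reg" "inv\<^bsub>Sym p\<^esub> (apow m) \<in> G_reg"
    using G_subset_G_reg[OF apow_in_G] subgroup.m_inv_closed[OF subgroup_G_reg] by auto
  ultimately show ?thesis
    using k subgroup.m_closed[OF subgroup_G_reg] unfolding K_def by (metis (no_types, lifting) mem_Collect_eq)
qed

lemma tuple_conj_single_at_0:
  assumes s: "\<And>y. y < p \<Longrightarrow> s y \<in> carrier (Sym p)" and k: "k \<in> carrier (Sym p)"
  shows "tuple s \<otimes>\<^bsub>Sym p\<^esub> single_at 0 k \<otimes>\<^bsub>Sym p\<^esub> inv\<^bsub>Sym p\<^esub> (tuple s) =
    single_at 0 (s 0 \<otimes>\<^bsub>Sym p\<^esub> k \<otimes>\<^bsub>Sym p\<^esub> inv\<^bsub>Sym p\<^esub> (s 0))"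
  unfolding single_at_def using s k
  by (simp add: tuple_inv tuple_mult) (rule tuple_cong, simp add: Sym.m_assoc)

lemma K_conj_by_tuple:
  assumes "tuple s \<in> G_reg" and "\<And>y. y < p \<Longrightarrow> s y \<in> carrier (Sym p)" and k: "k \<in> K"
  shows "s 0 \<otimes>\<^bsub>Sym p\<^esub> k \<otimes>\<^bsub>Sym p\<^esub> inv\<^bsub>Sym p\<^esub> (s 0) \<in> K"
proof -
  have "tuple s \<otimes>\<^bsub>Sym p\<^esub> single_at 0 k \<otimes>\<^bsub>Sym p\<^esub> inv\<^bsub>Sym p\<^esub> (tuple s) \<in> G_reg"
    using assms subgroup.m_closed[OF subgroup_G_reg] subgroup.m_inv_closed[OF subgroup_G_reg]
    by (simp add: K_def)
  then show ?thesis
    using assms p_pos by (simp add: K_def tuple_conj_single_at_0)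
qed

lemma K_conj_b_aut:
  "k \<in> K \<Longrightarrow> b_aut p r E n \<otimes>\<^bsub>Sym p\<^esub> k \<otimes>\<^bsub>Sym p\<^esub> inv\<^bsub>Sym p\<^esub> (b_aut p r E n) \<in> K"
  using K_conj_by_tuple[OF _ _, of "\<lambda>y. if y = 0 then b_aut p r E n else apow (dotE n y)"]
    b_aut_eq_tuple G_subset_G_reg[OF b_aut_in_G] by simp

lemma exists_inverse_mod: "a mod p \<noteq> 0 \<Longrightarrow> \<exists>t. (a * t) mod p = 1"
proof -
  assume "a mod p \<noteq> 0"
  then have "coprime a p"
    using prime_imp_coprime[OF prime_p] by (simp add: dvd_eq_mod_eq_0 ac_simps)
  then obtain t where "[a * t = 1] (mod p)"
    using cong_solve_coprime_nat by auto
  then show ?thesis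
    using p_gt_1 by (auto simp: cong_def)
qed

lemma dotE_scale: "dotE (\<lambda>i. c * n i) x = c * dotE n x"
  by (simp add: dotE_def sum_distrib_left ac_simps)

text \<open>Conjugation by \<open>a\<^sup>c\<close> is realised as the first section of \<open>a\<^sup>-\<^sup>m b\<^sup>n a\<^sup>m\<close> for suitable \<open>m\<close>
  and \<open>n\<close>, because \<open>E\<close> has a nonzero entry in its first row.\<close>

lemma K_conj_apow: "k \<in> K \<Longrightarrow> apow c \<otimes>\<^bsub>Sym p\<^esub> k \<otimes>\<^bsub>Sym p\<^esub> inv\<^bsub>Sym p\<^esub> (apow c) \<in> K"
proof -
  assume k: "k \<in> K"
  obtain m where m: "0 < m" "m < p" "E 0 m mod p \<noteq> 0"
    using E_row_0_nonzero by blast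
  obtain t where t: "(E 0 m * t) mod p = 1"
    using exists_inverse_mod[OF m(3)] by blast
  define n where "n = (\<lambda>i. c * t * s1 i)"
  define T where "T = [La (p - m), Lb n, La m]"
  have "eval_word T = tuple (\<lambda>y. eval_word (word_section T y))"
    using m by (intro eval_word_eq_tuple) (simp add: T_def)
  then have "tuple (\<lambda>y. eval_word (word_section T y)) \<in> G_reg"
    by (metis G_subset_G_reg eval_word_in_G)
  then have "eval_word (word_section T 0) \<otimes>\<^bsub>Sym p\<^esub> k \<otimes>\<^bsub>Sym p\<^esub> inv\<^bsub>Sym p\<^esub> (eval_word (word_section T 0)) \<in> K"
    using K_conj_by_tuple[where s = "\<lambda>y. eval_word (word_section T y)"] k by simp
  moreover have "eval_word (word_section T 0) = apow (c * t * E 0 m)"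
    using m by (simp add: T_def n_def dotE_scale dotE_s1)
  moreover have "apow (c * t * E 0 m) = apow c"
    using t by (intro apow_cong_mod) (metis mod_mult_right_eq mult.commute mult.left_commute mult_1_right)
  ultimately show ?thesis
    by simp
qed

definition comm :: "(nat list \<Rightarrow> nat list) \<Rightarrow> (nat list \<Rightarrow> nat list) \<Rightarrow> nat list \<Rightarrow> nat list"
  where "comm x y = x \<otimes>\<^bsub>Sym p\<^esub> y \<otimes>\<^bsub>Sym p\<^esub> inv\<^bsub>Sym p\<^esub> x \<otimes>\<^bsub>Sym p\<^esub> inv\<^bsub>Sym p\<^esub> y"

lemma comm_in_Sym [simp]: "x \<in> carrier (Sym p) \<Longrightarrow> y \<in> carrier (Sym p) \<Longrightarrow> comm x y \<in> carrier (Sym p)"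
  by (simp add: comm_def)

lemma inv_comm: "x \<in> carrier (Sym p) \<Longrightarrow> y \<in> carrier (Sym p) \<Longrightarrow> inv\<^bsub>Sym p\<^esub> (comm x y) = comm y x"
  by (simp add: comm_def Sym.m_assoc Sym.inv_mult_group)

lemma comm_mult_right:
  "x \<in> carrier (Sym p) \<Longrightarrow> y \<in> carrier (Sym p) \<Longrightarrow> z \<in> carrier (Sym p) \<Longrightarrow>
   comm x (y \<otimes>\<^bsub>Sym p\<^esub> z) = comm x y \<otimes>\<^bsub>Sym p\<^esub> (y \<otimes>\<^bsub>Sym p\<^esub> comm x z \<otimes>\<^bsub>Sym p\<^esub> inv\<^bsub>Sym p\<^esub> y)"
  by (simp add: comm_def Sym.m_assoc Sym.inv_mult_group Sym.inv_mult_cancel_left Sym.mult_inv_cancel_left)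

lemma comm_apow_apow: "comm (apow c) (apow d) = \<one>\<^bsub>Sym p\<^esub>"
proof -
  have "apow c \<otimes>\<^bsub>Sym p\<^esub> apow d = apow d \<otimes>\<^bsub>Sym p\<^esub> apow c"
    by (simp add: apow_mult add.commute)
  then show ?thesis
    unfolding comm_def by (simp add: Sym.m_assoc)
qed

lemma tuple_comm:
  assumes "\<And>y. y < p \<Longrightarrow> s y \<in> carrier (Sym p)" and "\<And>y. y < p \<Longrightarrow> t y \<in> carrier (Sym p)"
  shows "comm (tuple s) (tuple t) = tuple (\<lambda>y. comm (s y) (t y))"
  using assms by (simp add: comm_def tuple_inv tuple_mult)

lemma K_comm_apow_mult:
  assumes "x \<in> carrier (Sym p)" and "comm x (apow d) \<in> K"
  shows "comm x (apow (d * k)) \<in> K"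
proof (induction k)
  case 0
  then show ?case
    using subgroup.one_closed[OF subgroup_K] assms(1)
    by (simp add: apow_mod_eq_0 comm_def Sym.m_assoc)
next
  case (Suc k)
  have "comm x (apow (d * Suc k)) = comm x (apow d) \<otimes>\<^bsub>Sym p\<^esub>
      (apow d \<otimes>\<^bsub>Sym p\<^esub> comm x (apow (d * k)) \<otimes>\<^bsub>Sym p\<^esub> inv\<^bsub>Sym p\<^esub> (apow d))"
    using comm_mult_right[OF assms(1)] by (simp add: apow_mult[symmetric])
  then show ?case
    using subgroup.m_closed[OF subgroup_K assms(2) K_conj_apow[OF Suc.IH]] by simp
qed

lemma comm_b_s1_apow_in_K: "comm (b_aut p r E s1) (apow c) \<in> K"
proof -
  have "single_at 0 (comm_ba p r E) \<in> G_reg"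
    using c_aut_in_G_reg by (simp add: c_aut_eq_single_at)
  then have "comm (apow 1) (b_aut p r E s1) \<in> K"
    using comm_ba_in_Sym by (simp add: K_def comm_ba_def comm_def a_aut_eq)
  then have "comm (b_aut p r E s1) (apow 1) \<in> K"
    using subgroup.m_inv_closed[OF subgroup_K] by (metis inv_comm apow_in_Sym b_aut_in_Sym)
  from K_comm_apow_mult[OF _ this, of c] show ?thesis
    by simp
qed

lemma tuple_eq_single_at_mult:
  assumes m: "0 < m" "m < p" and s: "\<And>y. y < p \<Longrightarrow> s y \<in> carrier (Sym p)"
    and one: "\<And>y. y < p \<Longrightarrow> y \<noteq> 0 \<Longrightarrow> y \<noteq> m \<Longrightarrow> s y = \<one>\<^bsub>Sym p\<^esub>"
  shows "tuple s = single_at 0 (s 0) \<otimes>\<^bsub>Sym p\<^esub> single_at m (s m)"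
  unfolding single_at_def using assms p_pos
  by (subst tuple_mult) (auto intro!: tuple_cong simp: one)

text \<open>The sections of \<open>[b\<^sup>s\<^sup>1, a\<^sup>m b\<^sup>n a\<^sup>-\<^sup>m] \<in> G\<close> are trivial except at \<open>0\<close>, where they lie in \<open>K\<close>
  by the previous lemma, and at \<open>m\<close>, where one finds \<open>[a\<^bsup>E 0 m\<^esup>, b\<^sup>n]\<close>.\<close>

lemma comm_b_aut_apow_E_in_K:
  assumes m: "0 < m" "m < p"
  shows "comm (b_aut p r E n) (apow (E 0 m)) \<in> K"
proof -
  define T where "T = [La m, Lb n, La (p - m)]"
  define \<sigma> where "\<sigma> y = (if y = 0 then b_aut p r E s1 else apow (dotE s1 y))" for y
  define \<tau> where "\<tau> y = eval_word (word_section T y)" for y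
  have \<sigma>_in: "\<sigma> y \<in> carrier (Sym p)" and \<tau>_in: "\<tau> y \<in> carrier (Sym p)" for y
    by (simp_all add: \<sigma>_def \<tau>_def)
  have \<tau>: "\<tau> y = (if y = m then b_aut p r E n else apow (dotE n ((y + (p - m)) mod p)))" if "y < p" for y
    using that m add_minus_mod_eq_0_iff[OF that m(2)] by (simp add: \<tau>_def T_def)
  have "b_aut p r E s1 = tuple \<sigma>"
    unfolding \<sigma>_def[abs_def] by (rule b_aut_eq_tuple)
  moreover have "eval_word T = tuple \<tau>"
    unfolding \<tau>_def[abs_def] using m by (intro eval_word_eq_tuple) (simp add: T_def)
  ultimately have "comm (b_aut p r E s1) (eval_word T) = tuple (\<lambda>y. comm (\<sigma> y) (\<tau> y))"
    using \<sigma>_in \<tau>_in by (simp add: tuple_comm)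
  also have "\<dots> = single_at 0 (comm (\<sigma> 0) (\<tau> 0)) \<otimes>\<^bsub>Sym p\<^esub> single_at m (comm (\<sigma> m) (\<tau> m))"
    using m \<sigma>_in \<tau>_in by (intro tuple_eq_single_at_mult) (simp_all add: \<sigma>_def \<tau> comm_apow_apow)
  finally have eq: "single_at m (comm (\<sigma> m) (\<tau> m)) =
      inv\<^bsub>Sym p\<^esub> (single_at 0 (comm (\<sigma> 0) (\<tau> 0))) \<otimes>\<^bsub>Sym p\<^esub> comm (b_aut p r E s1) (eval_word T)"
    using \<sigma>_in \<tau>_in by (simp add: single_at_in_Sym Sym.m_assoc[symmetric])
  have "comm (\<sigma> 0) (\<tau> 0) \<in> K"
    using m \<tau>[of 0] by (simp add: \<sigma>_def comm_b_s1_apow_in_K)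
  then have "inv\<^bsub>Sym p\<^esub> (single_at 0 (comm (\<sigma> 0) (\<tau> 0))) \<in> G_reg"
    using subgroup.m_inv_closed[OF subgroup_G_reg] by (simp add: K_def)
  moreover have "comm (b_aut p r E s1) (eval_word T) \<in> G_reg"
    using subgroup.m_closed[OF subgroup_G] subgroup.m_inv_closed[OF subgroup_G] b_aut_in_G eval_word_in_G
    by (intro G_subset_G_reg) (simp add: comm_def)
  ultimately have "single_at m (comm (\<sigma> m) (\<tau> m)) \<in> G_reg"
    unfolding eq by (rule subgroup.m_closed[OF subgroup_G_reg])
  then have "comm (\<sigma> m) (\<tau> m) \<in> K"
    using single_at_in_G_reg_iff[OF m(2)] \<sigma>_in \<tau>_in by simp
  then have "inv\<^bsub>Sym p\<^esub> (comm (\<sigma> m) (\<tau> m)) \<in> K"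
    by (rule subgroup.m_inv_closed[OF subgroup_K])
  then show ?thesis
    using m \<tau>[of m] by (simp add: \<sigma>_def dotE_s1 inv_comm)
qed

lemma comm_b_aut_apow_in_K: "comm (b_aut p r E n) (apow c) \<in> K"
proof -
  obtain m where m: "0 < m" "m < p" "E 0 m mod p \<noteq> 0"
    using E_row_0_nonzero by blast
  obtain t where t: "(E 0 m * t) mod p = 1"
    using exists_inverse_mod[OF m(3)] by blast
  have "comm (b_aut p r E n) (apow (E 0 m * t)) \<in> K"
    by (rule K_comm_apow_mult[OF b_aut_in_Sym comm_b_aut_apow_E_in_K[OF m(1,2)]])
  moreover have "apow (E 0 m * t) = apow 1"
    using t p_gt_1 by (intro apow_cong_mod) simp
  ultimately have "comm (b_aut p r E n) (apow 1) \<in> K"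
    by simp
  from K_comm_apow_mult[OF b_aut_in_Sym this, of c] show ?thesis
    by simp
qed

lemma eval_word_normal_form:
  "\<exists>k\<in>K. eval_word v = k \<otimes>\<^bsub>Sym p\<^esub> apow (a_exp v) \<otimes>\<^bsub>Sym p\<^esub> b_aut p r E (b_exp v)"
proof (induction v)
  case Nil
  have "b_aut p r E (\<lambda>i. 0) = \<one>\<^bsub>Sym p\<^esub>"
    by (rule b_aut_eq_one) (simp add: dotE_def)
  then show ?case
    using subgroup.one_closed[OF subgroup_K] by (intro bexI[of _ "\<one>\<^bsub>Sym p\<^esub>"]) (simp_all add: apow_mod_eq_0)
next
  case (Cons l v)
  then obtain k where k: "k \<in> K"
    and v: "eval_word v = k \<otimes>\<^bsub>Sym p\<^esub> apow (a_exp v) \<otimes>\<^bsub>Sym p\<^esub> b_aut p r E (b_exp v)"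
    by blast
  have k_in: "k \<in> carrier (Sym p)"
    using k by (rule K_in_Sym)
  show ?case
  proof (cases l)
    case (La c)
    have "eval_word (l # v) = (apow c \<otimes>\<^bsub>Sym p\<^esub> k \<otimes>\<^bsub>Sym p\<^esub> inv\<^bsub>Sym p\<^esub> (apow c)) \<otimes>\<^bsub>Sym p\<^esub>
        (apow c \<otimes>\<^bsub>Sym p\<^esub> apow (a_exp v)) \<otimes>\<^bsub>Sym p\<^esub> b_aut p r E (b_exp v)"
      using La v k_in by (simp add: Sym.m_assoc Sym.inv_mult_cancel_left)
    then show ?thesis
      using La K_conj_apow[OF k] by (auto simp: apow_mult)
  next
    case (Lb n)
    let ?b = "b_aut p r E n"
    have "eval_word (l # v) = (?b \<otimes>\<^bsub>Sym p\<^esub> k \<otimes>\<^bsub>Sym p\<^esub> inv\<^bsub>Sym p\<^esub> ?b \<otimes>\<^bsub>Sym p\<^esub> comm ?b (apow (a_exp v)))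
        \<otimes>\<^bsub>Sym p\<^esub> apow (a_exp v) \<otimes>\<^bsub>Sym p\<^esub> (?b \<otimes>\<^bsub>Sym p\<^esub> b_aut p r E (b_exp v))"
      using Lb v k_in by (simp add: comm_def Sym.m_assoc Sym.inv_mult_cancel_left)
    moreover have "?b \<otimes>\<^bsub>Sym p\<^esub> k \<otimes>\<^bsub>Sym p\<^esub> inv\<^bsub>Sym p\<^esub> ?b \<otimes>\<^bsub>Sym p\<^esub> comm ?b (apow (a_exp v)) \<in> K"
      using subgroup.m_closed[OF subgroup_K K_conj_b_aut[OF k] comm_b_aut_apow_in_K] .
    ultimately show ?thesis
      using Lb by (auto simp: b_aut_mult)
  qed
qed

lemma eval_word_in_K:
  assumes "a_exp v mod p = 0" and "\<And>i. i < r \<Longrightarrow> b_exp v i mod p = 0"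
  shows "eval_word v \<in> K"
proof -
  obtain k where k: "k \<in> K"
    and v: "eval_word v = k \<otimes>\<^bsub>Sym p\<^esub> apow (a_exp v) \<otimes>\<^bsub>Sym p\<^esub> b_aut p r E (b_exp v)"
    using eval_word_normal_form by blast
  have "dotE (b_exp v) x mod p = 0" for x
    using assms(2) unfolding dotE_def by (intro sum_mod_eq_0) (simp add: mod_mult_left_eq[symmetric])
  then have "b_aut p r E (b_exp v) = \<one>\<^bsub>Sym p\<^esub>"
    by (rule b_aut_eq_one)
  then show ?thesis
    using v k K_in_Sym[OF k] assms(1) by (simp add: apow_mod_eq_0)
qed

lemma tuple_in_G_reg:
  assumes z: "\<And>y. y < p \<Longrightarrow> z y \<in> K"
  shows "tuple z \<in> G_reg"
proof -
  have z_in: "z y \<in> carrier (Sym p)" if "y < p" for y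
    using z[OF that] by (rule K_in_Sym)
  have "tuple (\<lambda>y. if y < n then z y else \<one>\<^bsub>Sym p\<^esub>) \<in> G_reg" if "n \<le> p" for n
    using that
  proof (induction n)
    case 0
    then show ?case
      using subgroup.one_closed[OF subgroup_G_reg] by (simp add: tuple_one)
  next
    case (Suc n)
    have "tuple (\<lambda>y. if y < Suc n then z y else \<one>\<^bsub>Sym p\<^esub>) =
        tuple (\<lambda>y. if y < n then z y else \<one>\<^bsub>Sym p\<^esub>) \<otimes>\<^bsub>Sym p\<^esub> single_at n (z n)"
      unfolding single_at_def using Suc.prems z_in
      by (subst tuple_mult) (auto intro!: tuple_cong)
    moreover have "single_at n (z n) \<in> G_reg"
      using Suc.prems z z_in single_at_in_G_reg_iff by simp
    ultimately show ?case
      using Suc subgroup.m_closed[OF subgroup_G_reg] by simp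
  qed
  from this[of p] show ?thesis
    by (simp cong: tuple_cong)
qed

section \<open>Conjugating an element of order \<open>p\<close> to a power of \<open>a\<close>\<close>

lemma word_section_append:
  "word_section (v @ u) x = word_section v ((x + a_exp u) mod p) @ word_section u x"
  by (induction v) (simp_all add: mod_add_right_eq ac_simps)

lemma eval_word_pow: "eval_word (word_pow w k) = eval_word w [^]\<^bsub>Sym p\<^esub> k"
proof (induction k)
  case (Suc k)
  have "eval_word (word_pow w (Suc k)) = eval_word w \<otimes>\<^bsub>Sym p\<^esub> eval_word w [^]\<^bsub>Sym p\<^esub> k"
    using Suc by (simp add: word_pow_Suc eval_word_append)
  then show ?case
    by (metis Sym.nat_pow_Suc2 eval_word_in_Sym)
qed (simp add: word_pow_def)

lemma exists_word_with_section_b_exps: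
  "\<exists>W. a_exp W mod p = 0 \<and> (\<forall>y<p. b_exp (word_section W y) = \<beta> y)"
proof -
  define W where "W n = concat (map (\<lambda>k. [La k, Lb (\<beta> k), La (p - k)]) [0..<n])" for n
  have "a_exp (W n) = n * p \<and> (\<forall>y<p. b_exp (word_section (W n) y) = (if y < n then \<beta> y else (\<lambda>i. 0)))"
    if "n \<le> p" for n
    using that
  proof (induction n)
    case (Suc n)
    have W: "W (Suc n) = W n @ [La n, Lb (\<beta> n), La (p - n)]"
      by (simp add: W_def)
    have "b_exp (word_section (W (Suc n)) y) = (if y < Suc n then \<beta> y else (\<lambda>i. 0))" if "y < p" for y
      using Suc that add_minus_mod_eq_0_iff[OF that, of n]
      by (auto simp: W word_section_append)
    then show ?case
      using Suc by (simp add: W)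
  qed (simp add: W_def)
  from this[of p] show ?thesis
    by (intro exI[of _ "W p"]) simp
qed

context
  fixes w :: "letter list" and j :: nat
  assumes pow_p_eq_one: "eval_word (word_pow w p) = \<one>\<^bsub>Sym p\<^esub>"
    and j_inverse: "(a_exp w * j) mod p = 1"
begin

text \<open>The vertex \<open>x\<close> is reached from \<open>0\<close> by \<open>orbit_index x\<close> applications of \<open>w\<close>, and
  \<open>path_word x\<close> is the section at \<open>0\<close> of that power of \<open>w\<close>.\<close>

definition orbit_index :: "nat \<Rightarrow> nat"
  where "orbit_index x = (x * j) mod p"

definition path_word :: "nat \<Rightarrow> letter list"
  where "path_word x = word_section (word_pow w (orbit_index x)) 0"

lemma orbit_index_lt: "orbit_index x < p"
  using p_pos by (simp add: orbit_index_def)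

lemma orbit_index_a_exp: "x < p \<Longrightarrow> (orbit_index x * a_exp w) mod p = x"
proof -
  assume x: "x < p"
  have "(orbit_index x * a_exp w) mod p = (x * (a_exp w * j)) mod p"
    by (simp add: orbit_index_def mod_mult_left_eq mod_mult_right_eq ac_simps)
  also have "\<dots> = (x * ((a_exp w * j) mod p)) mod p"
    by (simp add: mod_mult_right_eq)
  finally show ?thesis
    using j_inverse x by simp
qed

lemma orbit_index_step: "orbit_index ((x + a_exp w) mod p) = (orbit_index x + 1) mod p"
proof -
  have "orbit_index ((x + a_exp w) mod p) = (x * j + a_exp w * j) mod p"
    by (simp add: orbit_index_def mod_mult_left_eq mod_mult_right_eq algebra_simps)
  also have "\<dots> = (orbit_index x + 1) mod p"
    unfolding orbit_index_def using j_inverse p_gt_1 by (intro mod_add_cong) simp_all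
  finally show ?thesis .
qed

lemma path_word_0: "path_word 0 = []"
  by (simp add: path_word_def orbit_index_def word_pow_def)

lemma path_word_step:
  assumes x: "x < p"
  shows "path_word ((x + a_exp w) mod p) = word_section w x @ path_word x \<or>
    path_word ((x + a_exp w) mod p) = [] \<and>
    eval_word (word_section w x @ path_word x) = \<one>\<^bsub>Sym p\<^esub>"
proof -
  define k where "k = orbit_index x"
  have k: "k < p"
    by (simp add: k_def orbit_index_lt)
  have Suc_k: "word_section (word_pow w (Suc k)) 0 = word_section w x @ path_word x"
    using orbit_index_a_exp[OF x]
    by (simp add: word_pow_Suc word_section_append a_exp_word_pow k_def path_word_def ac_simps)
  have next_x: "path_word ((x + a_exp w) mod p) = word_section (word_pow w (Suc k mod p)) 0"
    by (simp add: path_word_def orbit_index_step k_def)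
  show ?thesis
  proof (cases "Suc k = p")
    case True
    then have "path_word ((x + a_exp w) mod p) = []"
      using next_x by (simp add: word_pow_def)
    moreover have "eval_word (word_section w x @ path_word x) = \<one>\<^bsub>Sym p\<^esub>"
      using eval_word_section_eq_one[OF pow_p_eq_one p_pos] Suc_k True by simp
    ultimately show ?thesis
      by simp
  next
    case False
    then show ?thesis
      using next_x Suc_k k by simp
  qed
qed

lemma eval_path_word_step:
  "x < p \<Longrightarrow> eval_word (path_word ((x + a_exp w) mod p)) =
    eval_word (word_section w x) \<otimes>\<^bsub>Sym p\<^esub> eval_word (path_word x)"
  using path_word_step[of x] eval_word_append[of "word_section w x" "path_word x"] by auto

lemma a_exp_path_word_step:
  "x < p \<Longrightarrow> a_exp (path_word ((x + a_exp w) mod p)) mod p = (a_exp (word_section w x) + a_exp (path_word x)) mod p"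
  using path_word_step[of x] a_exp_mod_eq_0_if_eval_word_eq_one[of "word_section w x @ path_word x"] by auto

lemma b_exp_path_word_step:
  "x < p \<Longrightarrow> i < r \<Longrightarrow>
   b_exp (path_word ((x + a_exp w) mod p)) i mod p = (b_exp (word_section w x) i + b_exp (path_word x) i) mod p"
  using path_word_step[of x] b_exp_mod_eq_0_if_eval_word_eq_one[of "word_section w x @ path_word x" i] by auto

text \<open>By \<open>a_exp_word_section\<close>, \<open>section_a_exp x\<close> is the exponent of \<open>a\<close> (modulo \<open>p\<close>) of the
  section at \<open>x\<close> of any word whose sections carry the \<open>b\<close>-exponents of the words \<open>path_word y\<close>.\<close>

definition section_a_exp :: "nat \<Rightarrow> nat"
  where "section_a_exp x = (\<Sum>y<p. dotE0 (b_exp (path_word y)) (diff_mod x y))"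

lemma section_a_exp_step:
  assumes x: "x < p"
  shows "section_a_exp ((x + a_exp w) mod p) mod p = (a_exp (word_section w x) + section_a_exp x) mod p"
proof -
  define S where "S = (\<Sum>y<p. dotE0 (b_exp (word_section w y)) (diff_mod x y))"
  have "section_a_exp ((x + a_exp w) mod p) =
      (\<Sum>y<p. dotE0 (b_exp (path_word ((y + a_exp w) mod p))) (diff_mod ((x + a_exp w) mod p) ((y + a_exp w) mod p)))"
    unfolding section_a_exp_def by (rule sum_add_mod[OF p_pos, symmetric])
  also have "\<dots> = (\<Sum>y<p. dotE0 (b_exp (path_word ((y + a_exp w) mod p))) (diff_mod x y))"
    by (intro sum.cong) (simp_all add: diff_mod_add_mod)
  finally have shifted: "section_a_exp ((x + a_exp w) mod p) =
      (\<Sum>y<p. dotE0 (b_exp (path_word ((y + a_exp w) mod p))) (diff_mod x y))" .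
  have "[\<Sum>y<p. dotE0 (b_exp (path_word ((y + a_exp w) mod p))) (diff_mod x y) =
      \<Sum>y<p. dotE0 (\<lambda>i. b_exp (word_section w y) i + b_exp (path_word y) i) (diff_mod x y)] (mod p)"
    by (intro cong_sum) (auto simp: cong_def intro!: dotE0_cong_mod b_exp_path_word_step)
  moreover have "(\<Sum>y<p. dotE0 (\<lambda>i. b_exp (word_section w y) i + b_exp (path_word y) i) (diff_mod x y)) =
      S + section_a_exp x"
    by (simp add: S_def section_a_exp_def dotE0_add sum.distrib)
  moreover have "[S + section_a_exp x = a_exp (word_section w x) + section_a_exp x] (mod p)"
    unfolding cong_add_rcancel_nat S_def using a_exp_word_section[OF x, of w] by (simp add: cong_def)
  ultimately show ?thesis
    unfolding cong_def shifted by simp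
qed

lemma a_exp_path_word:
  assumes x: "x < p"
  shows "(a_exp (path_word x) + section_a_exp 0) mod p = section_a_exp x mod p"
proof -
  have "(a_exp (path_word ((k * a_exp w) mod p)) + section_a_exp 0) mod p = section_a_exp ((k * a_exp w) mod p) mod p"
    for k
  proof (induction k)
    case (Suc k)
    define y where "y = (k * a_exp w) mod p"
    have y: "y < p"
      using p_pos by (simp add: y_def)
    have Suc_k: "(Suc k * a_exp w) mod p = (a_exp w + y) mod p"
      by (simp add: y_def mod_add_right_eq)
    have "(a_exp (path_word ((y + a_exp w) mod p)) + section_a_exp 0) mod p =
        (a_exp (word_section w y) + (a_exp (path_word y) + section_a_exp 0)) mod p"
      using a_exp_path_word_step[OF y] by (metis add.assoc mod_add_left_eq)
    also have "\<dots> = (a_exp (word_section w y) + section_a_exp y) mod p"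
      using Suc.IH unfolding y_def by (rule mod_add_cong[OF refl])
    also have "\<dots> = section_a_exp ((y + a_exp w) mod p) mod p"
      by (rule section_a_exp_step[OF y, symmetric])
    finally show ?case
      unfolding Suc_k by (simp only: add.commute)
  qed (simp add: path_word_0)
  from this[of "orbit_index x"] show ?thesis
    using orbit_index_a_exp[OF x] by simp
qed

definition conj_word :: "nat \<Rightarrow> letter list"
  where "conj_word y = path_word y @ [La (section_a_exp 0)]"

definition conjugator :: "nat list \<Rightarrow> nat list"
  where "conjugator = tuple (\<lambda>y. eval_word (conj_word y))"

lemma conjugator_in_Sym: "conjugator \<in> carrier (Sym p)"
  unfolding conjugator_def by (rule tuple_in_Sym) simp

lemma conjugator_Nil: "conjugator [] = []"
  by (simp add: conjugator_def tuple_Nil)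

lemma conjugator_Cons: "x < p \<Longrightarrow> u \<in> Wd p \<Longrightarrow> conjugator (x # u) = x # eval_word (conj_word x) u"
  by (simp add: conjugator_def tuple_Cons)

lemma conjugator_conj: "conjugator \<otimes>\<^bsub>Sym p\<^esub> apow (a_exp w) = eval_word w \<otimes>\<^bsub>Sym p\<^esub> conjugator"
proof (rule BijGroup_eqI[where S = "Wd p"])
  fix v assume v: "v \<in> Wd p"
  show "(conjugator \<otimes>\<^bsub>Sym p\<^esub> apow (a_exp w)) v = (eval_word w \<otimes>\<^bsub>Sym p\<^esub> conjugator) v"
  proof (cases v)
    case Nil
    then show ?thesis
      by (simp add: BijGroup_mult_apply conjugator_in_Sym conjugator_Nil apow_Nil eval_word_Nil)
  next
    case (Cons x u)
    then have x: "x < p" and u: "u \<in> Wd p"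
      using v by auto
    define u' where "u' = apow (section_a_exp 0) u"
    have u': "u' \<in> Wd p"
      unfolding u'_def using u by (rule BijGroup_maps[OF apow_in_Sym])
    have conj_word: "eval_word (conj_word y) u = eval_word (path_word y) u'" for y
      using u by (simp add: conj_word_def u'_def eval_word_append_apply)
    have "(conjugator \<otimes>\<^bsub>Sym p\<^esub> apow (a_exp w)) v =
        ((x + a_exp w) mod p) # eval_word (path_word ((x + a_exp w) mod p)) u'"
      using Cons x u p_pos
      by (simp add: BijGroup_mult_apply conjugator_in_Sym apow_Cons conjugator_Cons conj_word)
    also have "\<dots> = ((x + a_exp w) mod p) # eval_word (word_section w x) (eval_word (path_word x) u')"
      using x u' by (simp add: eval_path_word_step BijGroup_mult_apply)
    also have "\<dots> = eval_word w (x # eval_word (path_word x) u')"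
      using x u' by (simp add: eval_word_Cons eval_word_maps)
    also have "\<dots> = (eval_word w \<otimes>\<^bsub>Sym p\<^esub> conjugator) v"
      using Cons x u
      by (simp add: BijGroup_mult_apply conjugator_in_Sym conjugator_Cons conj_word)
    finally show ?thesis .
  qed
qed (simp_all add: conjugator_in_Sym)

text \<open>Choose a word \<open>W \<in> G\<close> whose sections have the \<open>b\<close>-exponents of the words \<open>path_word y\<close>. Then
  \<open>W\<^sup>-\<^sup>1 \<cdot> conjugator\<close> has sections with trivial exponent sums, which lie in \<open>K\<close>.\<close>

lemma conjugator_in_G_reg: "conjugator \<in> G_reg"
proof -
  obtain W where W_a_exp: "a_exp W mod p = 0"
    and W_b_exp: "\<forall>y<p. b_exp (word_section W y) = b_exp (path_word y)"
    using exists_word_with_section_b_exps[of "\<lambda>y. b_exp (path_word y)"] by metis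
  define z where "z y = eval_word (inv_word (word_section W y) @ conj_word y)" for y
  have z_in_K: "z y \<in> K" if y: "y < p" for y
    unfolding z_def
  proof (rule eval_word_in_K)
    define s where "s = word_section W y"
    have "a_exp s mod p = section_a_exp y mod p"
      using a_exp_word_section[OF y, of W] W_b_exp by (simp add: s_def section_a_exp_def)
    moreover have "a_exp (conj_word y) mod p = section_a_exp y mod p"
      using a_exp_path_word[OF y] by (simp add: conj_word_def add.commute)
    ultimately have "(a_exp (inv_word s) + a_exp (conj_word y)) mod p = (a_exp (inv_word s) + a_exp s) mod p"
      by (metis mod_add_right_eq)
    then show "a_exp (inv_word (word_section W y) @ conj_word y) mod p = 0"
      using a_exp_inv_word[of s] by (simp add: s_def)
    fix i
    have "b_exp (conj_word y) i = b_exp s i"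
      using W_b_exp y by (simp add: conj_word_def s_def)
    then show "b_exp (inv_word (word_section W y) @ conj_word y) i mod p = 0"
      using b_exp_inv_word[of s i] by (simp add: s_def)
  qed
  have "eval_word W = tuple (\<lambda>y. eval_word (word_section W y))"
    by (rule eval_word_eq_tuple[OF W_a_exp])
  then have "eval_word W \<otimes>\<^bsub>Sym p\<^esub> tuple z = tuple (\<lambda>y. eval_word (word_section W y) \<otimes>\<^bsub>Sym p\<^esub> z y)"
    by (simp add: tuple_mult z_def)
  also have "\<dots> = conjugator"
    unfolding conjugator_def
    by (rule tuple_cong) (simp add: z_def eval_word_append eval_inv_word Sym.mult_inv_cancel_left)
  moreover have "tuple z \<in> G_reg"
    using z_in_K by (rule tuple_in_G_reg)
  ultimately show ?thesis
    using subgroup.m_closed[OF subgroup_G_reg G_subset_G_reg[OF eval_word_in_G]] by metis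
qed

end

lemma conjugate_to_apow:
  assumes a_exp: "a_exp w mod p \<noteq> 0" and pow: "eval_word w [^]\<^bsub>Sym p\<^esub> p = \<one>\<^bsub>Sym p\<^esub>"
  shows "\<exists>h\<in>G_reg. eval_word w = h \<otimes>\<^bsub>Sym p\<^esub> apow (a_exp w) \<otimes>\<^bsub>Sym p\<^esub> inv\<^bsub>Sym p\<^esub> h"
proof -
  obtain j where j: "(a_exp w * j) mod p = 1"
    using exists_inverse_mod[OF a_exp] by blast
  have "eval_word (word_pow w p) = \<one>\<^bsub>Sym p\<^esub>"
    using pow by (simp add: eval_word_pow)
  note conjugator = conjugator_conj[OF this j] conjugator_in_Sym[OF this j] conjugator_in_G_reg[OF this j]
  have "conjugator w j \<otimes>\<^bsub>Sym p\<^esub> apow (a_exp w) \<otimes>\<^bsub>Sym p\<^esub> inv\<^bsub>Sym p\<^esub> (conjugator w j) = eval_word w"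
    using conjugator(1,2) by (simp add: Sym.m_assoc)
  then show ?thesis
    using conjugator(3) by metis
qed

lemma eval_word_in_Stab1: "a_exp w mod p = 0 \<Longrightarrow> eval_word w \<in> Stab1 p G"
  using eval_word_Cons[OF _ Wd_Nil] eval_word_in_G by (simp add: Stab1_def eval_word_Nil add_mod_eq_self)

end

theorem mainTheorem12:
  fixes p r :: nat and E :: "nat \<Rightarrow> nat \<Rightarrow> nat" and g :: "nat list \<Rightarrow> nat list"
  assumes "Factorial_Ring.prime p" and "odd p" and "r \<ge> 1"
    and "\<forall>i<r. \<forall>j\<in>{1..p-1}. E i j < p"
    and "rows_lin_indep p r E"
    and "row_space p r E \<noteq> const_space p"
    and "g \<in> multiGGS p r E"
    and "group.ord (Sym p) g = p"
  shows "g \<in> Stab1 p (multiGGS p r E) \<or>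
         (\<exists>h \<in> Greg p r E. \<exists>k::nat.
            g = h \<otimes>\<^bsub>Sym p\<^esub> (a_aut p [^]\<^bsub>Sym p\<^esub> k) \<otimes>\<^bsub>Sym p\<^esub> inv\<^bsub>Sym p\<^esub> h)"
proof -
  interpret multi_GGS p r E
    using assms(1,3,5) by unfold_locales
  obtain w where g: "g = eval_word w"
    using G_eq_eval_word[OF assms(7)] by blast
  show ?thesis
  proof (cases "a_exp w mod p = 0")
    case True
    then show ?thesis
      using eval_word_in_Stab1 g by simp
  next
    case False
    have "g [^]\<^bsub>Sym p\<^esub> group.ord (Sym p) g = \<one>\<^bsub>Sym p\<^esub>"
      using g by (simp add: Sym.pow_ord_eq_1)
    then have "g [^]\<^bsub>Sym p\<^esub> p = \<one>\<^bsub>Sym p\<^esub>"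
      using assms(8) by simp
    then show ?thesis
      using conjugate_to_apow[OF False] g by (auto simp: a_aut_pow)
  qed
qed

end
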